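(* There is a sufficiently large absolute constant $c>0$ such that for all $\mu,\mu^*\in\mathbb R^d$ with $\mu\neq0$ and $c\le\|\mu\|\le\frac43\langle\hat\mu,\mu^*\rangle$, where $\hat\mu=\mu/\|\mu\|$, the vector $$G(\mu,\mu^* )=\mathbb E_{x\sim\mathcal N(\mu^*,\mathrm{Id})}\Big[-\tfrac12\tanh''(\mu^\top x)\|\mu\|^2x+\tanh'(\mu^\top x)(\mu^\top x)\,x-\tanh'(\mu^\top x)\mu\Big]$$ satisfies $\|G(\mu,\mu^* )\|\le0.01\,\|\mu-\mu^*\|$.
   Context: In the paper this is stated for $\mu=\mu_t$ (the current parameter at noise scale $t$) and $\mu^*=\mu_t^*=e^{-t}\mu^*$, for any noise scale $t$; these are arbitrary vectors in $\mathbb R^d$. *)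

theory Defs
  imports "HOL-Probability.Probability"
begin

text \<open>Vectors in R^d are represented as functions nat => real; only coordinates i < d matter.\<close>

definition vinner :: "nat \<Rightarrow> (nat \<Rightarrow> real) \<Rightarrow> (nat \<Rightarrow> real) \<Rightarrow> real" where
  "vinner d u v = (\<Sum>i<d. u i * v i)"

definition vnorm :: "nat \<Rightarrow> (nat \<Rightarrow> real) \<Rightarrow> real" where
  "vnorm d u = sqrt (vinner d u u)"

definition gauss :: "nat \<Rightarrow> (nat \<Rightarrow> real) \<Rightarrow> (nat \<Rightarrow> real) measure" where
  "gauss d m = PiM {..<d} (\<lambda>i. density lborel (normal_density (m i) 1))"

definition Gcomp :: "nat \<Rightarrow> (nat \<Rightarrow> real) \<Rightarrow> (nat \<Rightarrow> real) \<Rightarrow> nat \<Rightarrow> real" where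
  "Gcomp d mu mus i = (\<integral>x.
      - (1/2) * deriv (deriv tanh) (vinner d mu x) * (vnorm d mu)\<^sup>2 * x i
      + deriv tanh (vinner d mu x) * vinner d mu x * x i
      - deriv tanh (vinner d mu x) * mu i
    \<partial>gauss d mus)"

end

theory Submission
  imports Defs "HOL-Real_Asymp.Real_Asymp"
begin

text \<open>
Write s = mu.x, which is N(m, v) for x ~ N(mus, Id), where m = mu.mus and v = |mu|^2.
Stein's identity in coordinate i rewrites G as A (mus - mu) + B mu, where A and B are Gaussian
averages of scalar functions G_weight and G_radial of s. B vanishes when mus = mu, so it is
at most a Lipschitz constant of G_radial times |m - v| <= |mu| |mu - mus|. The alignment
hypothesis m >= 3v/4 keeps s >= v/2 outside a Gaussian tail, and there every derivative of
tanh is O(s^-4); hence A = O(1/v), B = O(|m - v| / v^3) and |G| = O(1/v) |mu - mus|.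
\<close>

definition tanh' :: "real \<Rightarrow> real" where "tanh' x = 1 - (tanh x)\<^sup>2"
definition tanh'' :: "real \<Rightarrow> real" where "tanh'' x = -2 * tanh x * tanh' x"
definition tanh''' :: "real \<Rightarrow> real" where "tanh''' x = tanh' x * (6 * (tanh x)\<^sup>2 - 2)"
definition tanh'''' :: "real \<Rightarrow> real" where "tanh'''' x = tanh' x * tanh x * (16 - 24 * (tanh x)\<^sup>2)"

lemma has_real_derivative_tanh: "(tanh has_real_derivative tanh' x) (at x)"
  unfolding tanh'_def by (rule has_field_derivative_tanh[of "\<lambda>x. x", OF cosh_real_nonzero DERIV_ident, simplified])

lemma has_real_derivative_tanh': "(tanh' has_real_derivative tanh'' x) (at x)"
  unfolding tanh'_def[abs_def] tanh''_def tanh'_def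
  by (rule derivative_eq_intros refl | simp)+

lemma has_real_derivative_tanh'': "(tanh'' has_real_derivative tanh''' x) (at x)"
  unfolding tanh''_def[abs_def] tanh'''_def tanh'_def
  by (rule DERIV_cong, (rule derivative_eq_intros refl | simp)+) algebra

lemma has_real_derivative_tanh''': "(tanh''' has_real_derivative tanh'''' x) (at x)"
  unfolding tanh'''_def[abs_def] tanh''''_def tanh'_def
  by (rule DERIV_cong, (rule derivative_eq_intros refl | simp)+) algebra

lemma deriv_tanh: "deriv tanh = tanh'"
  using has_real_derivative_tanh DERIV_imp_deriv by blast

lemma deriv_tanh': "deriv tanh' = tanh''"
  using has_real_derivative_tanh' DERIV_imp_deriv by blast

lemma isCont_tanh': "isCont tanh' x"
  using has_real_derivative_tanh' by (rule DERIV_isCont)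

lemma isCont_tanh'': "isCont tanh'' x"
  using has_real_derivative_tanh'' by (rule DERIV_isCont)

lemma isCont_tanh''': "isCont tanh''' x"
  using has_real_derivative_tanh''' by (rule DERIV_isCont)

lemma borel_measurable_continuous_real:
  "(\<And>x. isCont f x) \<Longrightarrow> (f::real \<Rightarrow> real) \<in> borel_measurable borel"
  by (intro borel_measurable_continuous_onI continuous_at_imp_continuous_on) auto

lemma tanh_measurable [measurable]: "(tanh :: real \<Rightarrow> real) \<in> borel_measurable borel"
  using has_real_derivative_tanh by (intro borel_measurable_continuous_real DERIV_isCont)

lemma tanh'_measurable [measurable]: "tanh' \<in> borel_measurable borel"
  and tanh''_measurable [measurable]: "tanh'' \<in> borel_measurable borel"
  and tanh'''_measurable [measurable]: "tanh''' \<in> borel_measurable borel"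
  by (intro borel_measurable_continuous_real isCont_tanh' isCont_tanh'' isCont_tanh''')+

lemma tanh'_minus [simp]: "tanh' (-x) = tanh' x"
  by (simp add: tanh'_def)

lemma tanh'_mult_cosh_square: "tanh' x * (cosh x)\<^sup>2 = 1"
proof -
  have "tanh' x * (cosh x)\<^sup>2 = (cosh x)\<^sup>2 - (tanh x * cosh x)\<^sup>2"
    by (simp add: tanh'_def algebra_simps power_mult_distrib)
  also have "\<dots> = (cosh x)\<^sup>2 - (sinh x)\<^sup>2" by (simp add: tanh_def)
  also have "\<dots> = 1" by (simp add: cosh_square_eq)
  finally show ?thesis .
qed

lemma tanh'_pos: "0 < tanh' x"
  using tanh_real_bounds[of x] by (simp add: tanh'_def abs_square_less_1 abs_less_iff)

lemma tanh'_le_1: "tanh' x \<le> 1"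
  by (simp add: tanh'_def)

lemma abs_tanh'_le_1: "\<bar>tanh' x\<bar> \<le> 1"
  using tanh'_pos[of x] tanh'_le_1[of x] by simp

lemma abs_tanh''_le: "\<bar>tanh'' x\<bar> \<le> 2 * tanh' x"
proof -
  have "\<bar>tanh x\<bar> \<le> 1" using tanh_real_bounds[of x] by auto
  then show ?thesis
    using tanh'_pos[of x] by (auto simp: tanh''_def abs_mult intro: mult_right_le_one_le)
qed

lemma abs_tanh'''_le: "\<bar>tanh''' x\<bar> \<le> 4 * tanh' x"
proof -
  have "(tanh x)\<^sup>2 < 1" using tanh'_pos[of x] by (simp add: tanh'_def)
  then have "\<bar>6 * (tanh x)\<^sup>2 - 2\<bar> \<le> 4"
    using zero_le_power2[of "tanh x"] unfolding abs_le_iff by linarith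
  then show ?thesis
    using tanh'_pos[of x] by (simp add: tanh'''_def abs_mult mult_left_mono mult.commute)
qed

lemma abs_tanh''''_le: "\<bar>tanh'''' x\<bar> \<le> 16 * tanh' x"
proof -
  have "(tanh x)\<^sup>2 < 1" "\<bar>tanh x\<bar> \<le> 1" using tanh_real_bounds[of x] tanh'_pos[of x] by (auto simp: tanh'_def)
  then have "\<bar>tanh x\<bar> * \<bar>16 - 24 * (tanh x)\<^sup>2\<bar> \<le> 1 * 16"
    by (intro mult_mono) (auto simp: abs_le_iff)
  then show ?thesis
    using tanh'_pos[of x] by (simp add: tanh''''_def abs_mult mult_left_mono mult.commute mult.left_commute)
qed

lemma cosh_ge_1_plus_square: "1 + x\<^sup>2 / 4 \<le> cosh (x::real)"
proof -
  have "1 + \<bar>x\<bar> + \<bar>x\<bar>\<^sup>2 / 2 \<le> exp \<bar>x\<bar>" by (rule exp_lower_Taylor_quadratic) simp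
  moreover have "1 - \<bar>x\<bar> \<le> exp (- \<bar>x\<bar>)" using exp_ge_add_one_self[of "-\<bar>x\<bar>"] by simp
  moreover have "cosh x = (exp \<bar>x\<bar> + exp (-\<bar>x\<bar>)) / 2"
    by (cases "0 \<le> x") (simp_all add: cosh_def)
  ultimately show ?thesis by simp
qed

lemma tanh'_mult_abs_le_1: "tanh' x * \<bar>x\<bar> \<le> 1"
proof -
  have "\<bar>x\<bar> \<le> 1 + x\<^sup>2/4"
    using zero_le_power2[of "\<bar>x\<bar>/2 - 1"] by (simp add: power2_eq_square field_simps)
  also have "\<dots> \<le> cosh x" by (rule cosh_ge_1_plus_square)
  also have "\<dots> \<le> (cosh x)\<^sup>2" using cosh_real_ge_1[of x] by (simp add: power2_eq_square)
  finally have "tanh' x * \<bar>x\<bar> \<le> tanh' x * (cosh x)\<^sup>2"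
    using tanh'_pos[of x] by (intro mult_left_mono) auto
  then show ?thesis by (simp add: tanh'_mult_cosh_square)
qed

lemma tanh'_mult_power4_le: "tanh' x * x ^ 4 \<le> 16"
proof -
  have "(x\<^sup>2/4)\<^sup>2 \<le> (cosh x)\<^sup>2"
    using cosh_ge_1_plus_square[of x] by (intro power_mono) auto
  then have "tanh' x * x ^ 4 \<le> tanh' x * (16 * (cosh x)\<^sup>2)"
    using tanh'_pos[of x] by (intro mult_left_mono) (auto simp: power2_eq_square power4_eq_xxxx)
  then show ?thesis using tanh'_mult_cosh_square[of x] by (simp add: mult.left_commute)
qed

lemma tanh'_mult_le_right:
  assumes "0 < v" "v / 2 \<le> s"
  shows "tanh' s * s \<le> 128 / v ^ 3"
proof -
  have s: "0 < s" using assms by simp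
  have "tanh' s * s = (tanh' s * s ^ 4) / s ^ 3"
    using s by (simp add: power_eq_if)
  also have "\<dots> \<le> 16 / s ^ 3"
    using s by (intro divide_right_mono tanh'_mult_power4_le) simp
  also have "\<dots> \<le> 16 / (v / 2) ^ 3"
    using assms by (intro divide_left_mono power_mono mult_pos_pos) auto
  finally show ?thesis by (simp add: power_divide)
qed

lemma integral_lborel_eq_0_if_antiderivative_vanishes:
  fixes F f :: "real \<Rightarrow> real"
  assumes F: "\<And>x. (F has_real_derivative f x) (at x)"
    and cont: "\<And>x. isCont f x" and int: "integrable lborel f"
    and top: "(F \<longlongrightarrow> 0) at_top" and bot: "(F \<longlongrightarrow> 0) at_bot"
  shows "integral\<^sup>L lborel f = 0"
proof -
  have "interval_lebesgue_integral lborel (-\<infinity>) \<infinity> f = 0 - 0"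
  proof (rule interval_integral_FTC_integrable)
    show "(F has_vector_derivative f x) (at x)" for x
      using F[of x] by (simp add: has_real_derivative_iff_has_vector_derivative)
    show "set_integrable lborel (einterval (- \<infinity>) \<infinity>) f"
      using int by (simp add: set_integrable_def)
    show "((F \<circ> real_of_ereal) \<longlongrightarrow> 0) (at_right (- \<infinity>))"
      using bot by (simp add: ereal_tendsto_simps)
    show "((F \<circ> real_of_ereal) \<longlongrightarrow> 0) (at_left \<infinity>)"
      using top by (simp add: ereal_tendsto_simps)
  qed (use cont in simp_all)
  then show ?thesis
    by (simp add: interval_lebesgue_integral_def set_lebesgue_integral_def)
qed

lemma integral_lborel_odd_eq_0:
  fixes f :: "real \<Rightarrow> real"
  assumes "\<And>x. f (-x) = - f x"
  shows "integral\<^sup>L lborel f = 0"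
proof -
  have "integral\<^sup>L lborel f = \<bar>-1\<bar> *\<^sub>R (\<integral>x. f (0 + (-1) * x) \<partial>lborel)"
    by (rule lborel_integral_real_affine) simp
  also have "\<dots> = - integral\<^sup>L lborel f" using assms by simp
  finally show ?thesis by simp
qed

lemma normal_density_tendsto_0:
  assumes "0 < \<sigma>"
  shows "(normal_density c \<sigma> \<longlongrightarrow> 0) at_top" and "(normal_density c \<sigma> \<longlongrightarrow> 0) at_bot"
  unfolding normal_density_def[abs_def] using assms by real_asymp+

lemma has_real_derivative_normal_density:
  assumes "0 < \<sigma>"
  shows "(normal_density c \<sigma> has_real_derivative - (x - c) / \<sigma>\<^sup>2 * normal_density c \<sigma> x) (at x)"
proof -
  have "((\<lambda>x. - (x - c)\<^sup>2 / (2 * \<sigma>\<^sup>2)) has_real_derivative - (x - c) / \<sigma>\<^sup>2) (at x)"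
    using assms by (auto intro!: derivative_eq_intros simp: field_simps power2_eq_square)
  from DERIV_cmult[OF DERIV_chain2[OF DERIV_exp this], of "1 / sqrt (2 * pi * \<sigma>\<^sup>2)"]
  show ?thesis unfolding normal_density_def[abs_def] by (simp add: mult_ac)
qed

lemma integrable_normal_density_mult_moment:
  fixes f :: "real \<Rightarrow> real"
  assumes \<sigma>: "0 < \<sigma>" and f: "f \<in> borel_measurable borel" and bound: "\<And>x. \<bar>f x\<bar> \<le> B"
  shows "integrable lborel (\<lambda>x. normal_density c \<sigma> x * ((x - c) ^ k * f x))"
proof (rule Bochner_Integration.integrable_bound)
  show "integrable lborel (\<lambda>x. B * (normal_density c \<sigma> x * \<bar>x - c\<bar> ^ k))"
    using integrable_normal_moment_abs[OF \<sigma>] by simp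
  show "AE x in lborel. norm (normal_density c \<sigma> x * ((x - c) ^ k * f x))
      \<le> norm (B * (normal_density c \<sigma> x * \<bar>x - c\<bar> ^ k))"
  proof (rule AE_I2)
    fix x
    have "\<bar>normal_density c \<sigma> x * ((x - c) ^ k * f x)\<bar> = normal_density c \<sigma> x * \<bar>x - c\<bar> ^ k * \<bar>f x\<bar>"
      by (simp add: abs_mult power_abs)
    also have "\<dots> \<le> normal_density c \<sigma> x * \<bar>x - c\<bar> ^ k * B"
      using bound by (intro mult_left_mono) auto
    finally show "norm (normal_density c \<sigma> x * ((x - c) ^ k * f x))
        \<le> norm (B * (normal_density c \<sigma> x * \<bar>x - c\<bar> ^ k))"
      using order_trans[OF abs_ge_zero bound] by (simp add: abs_mult mult_ac)
  qed
qed (use f in simp)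

lemma integrable_normal_density_mult:
  fixes f :: "real \<Rightarrow> real"
  assumes "0 < \<sigma>" "f \<in> borel_measurable borel" "\<And>x. \<bar>f x\<bar> \<le> B"
  shows "integrable lborel (\<lambda>x. normal_density c \<sigma> x * f x)"
  using integrable_normal_density_mult_moment[OF assms, where c = c and k = 0] by simp

lemma stein_identity:
  fixes f f' :: "real \<Rightarrow> real"
  assumes \<sigma>: "0 < \<sigma>"
    and f: "\<And>x. (f has_real_derivative f' x) (at x)" and cont: "\<And>x. isCont f' x"
    and bound: "\<And>x. \<bar>f x\<bar> \<le> B" and bound': "\<And>x. \<bar>f' x\<bar> \<le> B'"
  shows "(\<integral>x. normal_density c \<sigma> x * ((x - c) * f x) \<partial>lborel)
       = \<sigma>\<^sup>2 * (\<integral>x. normal_density c \<sigma> x * f' x \<partial>lborel)"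
proof -
  let ?p = "normal_density c \<sigma>"
  have cont_f: "isCont f x" for x using f by (rule DERIV_isCont)
  have [measurable]: "f \<in> borel_measurable borel" "f' \<in> borel_measurable borel"
    using cont_f cont by (auto intro: borel_measurable_continuous_real)
  have int': "integrable lborel (\<lambda>x. ?p x * f' x)"
    using integrable_normal_density_mult[OF \<sigma> _ bound'] by simp
  have int: "integrable lborel (\<lambda>x. ?p x * ((x - c) * f x))"
    using integrable_normal_density_mult_moment[OF \<sigma> _ bound, where c = c and k = 1] by simp
  let ?g = "\<lambda>x. ?p x * f' x - (1 / \<sigma>\<^sup>2) * (?p x * ((x - c) * f x))"
  have "integral\<^sup>L lborel ?g = 0"
  proof (rule integral_lborel_eq_0_if_antiderivative_vanishes)
    show "((\<lambda>x. ?p x * f x) has_real_derivative ?g x) (at x)" for x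
      using DERIV_mult[OF has_real_derivative_normal_density[OF \<sigma>, of c x] f[of x]]
      by (rule DERIV_cong) (use \<sigma> in \<open>simp add: field_simps\<close>)
    show "isCont ?g x" for x
      using \<sigma> by (intro continuous_intros cont cont_f DERIV_isCont[OF has_real_derivative_normal_density])
    have "norm (?p x * f x) \<le> \<bar>B\<bar> * ?p x" for x
      using bound[of x] by (simp add: abs_mult mult.commute mult_right_mono)
    then have dominated: "\<forall>\<^sub>F x in F. norm (?p x * f x) \<le> \<bar>B\<bar> * ?p x" for F
      by (simp add: always_eventually)
    show "((\<lambda>x. ?p x * f x) \<longlongrightarrow> 0) at_top" "((\<lambda>x. ?p x * f x) \<longlongrightarrow> 0) at_bot"
      using tendsto_mult_right_zero[OF normal_density_tendsto_0(1)[OF \<sigma>]]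
        tendsto_mult_right_zero[OF normal_density_tendsto_0(2)[OF \<sigma>]]
      by (auto intro: Lim_null_comparison[OF dominated])
  qed (use int int' in simp)
  then have "(\<integral>x. ?p x * f' x \<partial>lborel) - (1 / \<sigma>\<^sup>2) * (\<integral>x. ?p x * ((x - c) * f x) \<partial>lborel) = 0"
    using int int' by simp
  then show ?thesis using \<sigma> by (simp add: field_simps)
qed

lemma integral_normal_density_eq_std:
  fixes f :: "real \<Rightarrow> real"
  assumes \<sigma>: "0 < \<sigma>"
  shows "(\<integral>s. normal_density c \<sigma> s * f s \<partial>lborel) = (\<integral>z. std_normal_density z * f (c + \<sigma> * z) \<partial>lborel)"
proof -
  have density: "normal_density c \<sigma> (c + \<sigma> * z) = std_normal_density z / \<sigma>" for z
    using \<sigma> by (simp add: normal_density_def real_sqrt_mult power_mult_distrib)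
  have "(\<integral>s. normal_density c \<sigma> s * f s \<partial>lborel)
      = \<bar>\<sigma>\<bar> *\<^sub>R (\<integral>z. normal_density c \<sigma> (c + \<sigma> * z) * f (c + \<sigma> * z) \<partial>lborel)"
    using \<sigma> by (intro lborel_integral_real_affine) simp
  also have "\<dots> = (\<integral>z. std_normal_density z * f (c + \<sigma> * z) \<partial>lborel)"
    using \<sigma> by (simp add: density)
  finally show ?thesis .
qed

lemma std_normal_integral_le_moment_bound:
  fixes f :: "real \<Rightarrow> real"
  assumes f: "f \<in> borel_measurable borel" and bound: "\<And>z. \<bar>f z\<bar> \<le> a * (1 + z ^ (2 * k))"
  shows "\<bar>\<integral>z. std_normal_density z * f z \<partial>lborel\<bar> \<le> a * (1 + fact (2 * k) / (2 ^ k * fact k))"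
proof -
  let ?g = "\<lambda>z. a * std_normal_density z + a * (std_normal_density z * z ^ (2 * k))"
  have int_g: "integrable lborel ?g"
    using integrable_std_normal_moment[of "2 * k"] by simp
  have dominated: "\<bar>std_normal_density z * f z\<bar> \<le> ?g z" for z
    using mult_left_mono[OF bound[of z] normal_density_nonneg[of 0 1 z]]
    by (simp add: abs_mult algebra_simps)
  have "integrable lborel (\<lambda>z. std_normal_density z * f z)"
    using f order_trans[OF dominated abs_ge_self]
    by (intro Bochner_Integration.integrable_bound[OF int_g]) auto
  then have "\<bar>\<integral>z. std_normal_density z * f z \<partial>lborel\<bar> \<le> integral\<^sup>L lborel ?g"
    using dominated by (intro integral_abs_bound_integral int_g) auto
  also have "\<dots> = a * (1 + fact (2 * k) / (2 ^ k * fact k))"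
    using integrable_std_normal_moment[of "2 * k"]
    by (simp add: integral_std_normal_moment_even distrib_left)
  finally show ?thesis .
qed

text \<open>With s = mu.x and v = |mu|^2 the integrand of G is G_weight v s * x - tanh' s * mu;
  primes denote derivatives in s.\<close>

definition G_weight :: "real \<Rightarrow> real \<Rightarrow> real" where
  "G_weight v s = - (1/2) * tanh'' s * v + tanh' s * s"

definition G_weight' :: "real \<Rightarrow> real \<Rightarrow> real" where
  "G_weight' v s = - (1/2) * tanh''' s * v + tanh'' s * s + tanh' s"

definition G_radial :: "real \<Rightarrow> real \<Rightarrow> real" where
  "G_radial v s = G_weight v s + G_weight' v s - tanh' s"

definition G_radial' :: "real \<Rightarrow> real \<Rightarrow> real" where
  "G_radial' v s =
    - (1/2) * v * (tanh''' s + tanh'''' s) + (tanh' s + tanh'' s) + s * (tanh'' s + tanh''' s)"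

lemma G_radial_eq: "G_radial v s = - (1/2) * v * (tanh'' s + tanh''' s) + s * (tanh' s + tanh'' s)"
  unfolding G_radial_def G_weight_def G_weight'_def by (simp add: algebra_simps)

lemma has_real_derivative_G_weight: "(G_weight v has_real_derivative G_weight' v s) (at s)"
  unfolding G_weight_def[abs_def] G_weight'_def
  by (rule DERIV_cong)
    (rule derivative_eq_intros has_real_derivative_tanh' has_real_derivative_tanh'' refl | simp)+

lemma has_real_derivative_G_radial: "(G_radial v has_real_derivative G_radial' v s) (at s)"
  unfolding G_radial_eq[abs_def] G_radial'_def
  by (rule DERIV_cong)
    (rule derivative_eq_intros has_real_derivative_tanh' has_real_derivative_tanh''
      has_real_derivative_tanh''' refl | simp)+

lemma isCont_G_weight': "isCont (G_weight' v) s"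
  unfolding G_weight'_def[abs_def] by (intro continuous_intros isCont_tanh' isCont_tanh'' isCont_tanh''')

lemma G_weight_measurable [measurable]: "G_weight v \<in> borel_measurable borel"
  and G_weight'_measurable [measurable]: "G_weight' v \<in> borel_measurable borel"
  and G_radial_measurable [measurable]: "G_radial v \<in> borel_measurable borel"
  unfolding G_weight_def[abs_def] G_weight'_def[abs_def] G_radial_def[abs_def] by measurable

lemma abs_G_weight_le:
  assumes "0 \<le> v"
  shows "\<bar>G_weight v s\<bar> \<le> tanh' s * (v + \<bar>s\<bar>)"
proof -
  have "\<bar>G_weight v s\<bar> \<le> \<bar>tanh'' s\<bar> * v / 2 + tanh' s * \<bar>s\<bar>"
    using assms tanh'_pos[of s] abs_triangle_ineq[of "- (1/2) * tanh'' s * v" "tanh' s * s"]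
    by (simp add: G_weight_def abs_mult)
  also have "\<dots> \<le> 2 * tanh' s * v / 2 + tanh' s * \<bar>s\<bar>"
    using assms abs_tanh''_le[of s] by (intro add_mono divide_right_mono mult_right_mono) auto
  finally show ?thesis by (simp add: algebra_simps)
qed

lemma abs_G_weight_le_global: "0 \<le> v \<Longrightarrow> \<bar>G_weight v s\<bar> \<le> v + 1"
  using abs_G_weight_le[of v s] mult_right_mono[OF tanh'_le_1, of v s] tanh'_mult_abs_le_1[of s]
  by (simp add: distrib_left)

lemma abs_G_weight'_le_global:
  assumes "0 \<le> v"
  shows "\<bar>G_weight' v s\<bar> \<le> 2 * v + 3"
proof -
  have "\<bar>G_weight' v s\<bar> \<le> \<bar>- (1/2) * tanh''' s * v\<bar> + \<bar>tanh'' s * s\<bar> + \<bar>tanh' s\<bar>"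
    unfolding G_weight'_def by linarith
  also have "\<dots> = \<bar>tanh''' s\<bar> * v / 2 + \<bar>tanh'' s\<bar> * \<bar>s\<bar> + tanh' s"
    using assms tanh'_pos[of s] by (simp add: abs_mult)
  also have "\<dots> \<le> 4 * tanh' s * v / 2 + 2 * tanh' s * \<bar>s\<bar> + tanh' s"
    using assms abs_tanh'''_le[of s] abs_tanh''_le[of s]
    by (intro add_mono divide_right_mono mult_right_mono) auto
  finally show ?thesis
    using assms tanh'_le_1[of s] tanh'_mult_abs_le_1[of s] mult_right_mono[OF tanh'_le_1 assms, of s]
    by linarith
qed

lemma abs_G_radial_le_global: "0 \<le> v \<Longrightarrow> \<bar>G_radial v s\<bar> \<le> 3 * v + 5"
  using abs_G_weight_le_global[of v s] abs_G_weight'_le_global[of v s] tanh'_pos[of s] tanh'_le_1[of s]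
  unfolding G_radial_def by linarith

lemma abs_G_radial'_le:
  assumes "0 \<le> v"
  shows "\<bar>G_radial' v s\<bar> \<le> tanh' s * (10 * v + 3 + 6 * \<bar>s\<bar>)"
proof -
  have "\<bar>G_radial' v s\<bar> \<le> v / 2 * (\<bar>tanh''' s\<bar> + \<bar>tanh'''' s\<bar>) + (tanh' s + \<bar>tanh'' s\<bar>)
      + \<bar>s\<bar> * (\<bar>tanh'' s\<bar> + \<bar>tanh''' s\<bar>)"
  proof -
    have "\<bar>G_radial' v s\<bar> \<le> \<bar>- (1/2) * v * (tanh''' s + tanh'''' s)\<bar> + \<bar>tanh' s + tanh'' s\<bar>
        + \<bar>s * (tanh'' s + tanh''' s)\<bar>"
      unfolding G_radial'_def by linarith
    also have "\<dots> = v / 2 * \<bar>tanh''' s + tanh'''' s\<bar> + \<bar>tanh' s + tanh'' s\<bar>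
        + \<bar>s\<bar> * \<bar>tanh'' s + tanh''' s\<bar>"
      using assms by (simp add: abs_mult)
    also have "\<dots> \<le> v / 2 * (\<bar>tanh''' s\<bar> + \<bar>tanh'''' s\<bar>) + (tanh' s + \<bar>tanh'' s\<bar>)
          + \<bar>s\<bar> * (\<bar>tanh'' s\<bar> + \<bar>tanh''' s\<bar>)"
      using assms tanh'_pos[of s] by (intro add_mono mult_left_mono abs_triangle_ineq) auto
    finally show ?thesis .
  qed
  also have "\<dots> \<le> v / 2 * (4 * tanh' s + 16 * tanh' s) + (tanh' s + 2 * tanh' s)
      + \<bar>s\<bar> * (2 * tanh' s + 4 * tanh' s)"
    using assms abs_tanh''_le[of s] abs_tanh'''_le[of s] abs_tanh''''_le[of s]
    by (intro add_mono mult_left_mono) auto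
  finally show ?thesis by (simp add: algebra_simps)
qed

lemma abs_G_radial'_le_global:
  assumes "0 \<le> v"
  shows "\<bar>G_radial' v s\<bar> \<le> 10 * v + 9"
proof -
  have "tanh' s * (10 * v + 3 + 6 * \<bar>s\<bar>) = tanh' s * (10 * v + 3) + 6 * (tanh' s * \<bar>s\<bar>)"
    by (simp add: algebra_simps)
  also have "\<dots> \<le> 1 * (10 * v + 3) + 6 * 1"
    using assms tanh'_le_1[of s] tanh'_mult_abs_le_1[of s] by (intro add_mono mult_right_mono) auto
  finally show ?thesis using abs_G_radial'_le[OF assms, of s] by simp
qed

lemma abs_G_weight_le_right:
  assumes "2 \<le> v" "v / 2 \<le> s"
  shows "\<bar>G_weight v s\<bar> \<le> 384 / v ^ 3"
proof -
  have "\<bar>G_weight v s\<bar> \<le> tanh' s * (2 * s + s)"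
    using assms tanh'_pos[of s] by (intro order_trans[OF abs_G_weight_le] mult_left_mono) auto
  also have "\<dots> = 3 * (tanh' s * s)" by simp
  also have "\<dots> \<le> 3 * (128 / v ^ 3)"
    using assms by (intro mult_left_mono tanh'_mult_le_right) auto
  finally show ?thesis by simp
qed

lemma abs_G_radial'_le_right:
  assumes "2 \<le> v" "v / 2 \<le> s"
  shows "\<bar>G_radial' v s\<bar> \<le> 3712 / v ^ 3"
proof -
  have "\<bar>G_radial' v s\<bar> \<le> tanh' s * (10 * (2 * s) + 3 * s + 6 * s)"
    using assms tanh'_pos[of s] by (intro order_trans[OF abs_G_radial'_le] mult_left_mono) auto
  also have "\<dots> = 29 * (tanh' s * s)" by simp
  also have "\<dots> \<le> 29 * (128 / v ^ 3)"
    using assms by (intro mult_left_mono tanh'_mult_le_right) auto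
  finally show ?thesis by simp
qed

lemma normal_density_mult_one_minus_tanh_even:
  assumes "0 < \<sigma>"
  shows "normal_density (\<sigma>\<^sup>2) \<sigma> (-s) * (1 - tanh (-s)) = normal_density (\<sigma>\<^sup>2) \<sigma> s * (1 - tanh s)"
proof -
  have closed_form: "normal_density (\<sigma>\<^sup>2) \<sigma> t * (1 - tanh t)
      = exp (- (t\<^sup>2 + \<sigma>\<^sup>2 * \<sigma>\<^sup>2) / (2 * \<sigma>\<^sup>2)) / (sqrt (2 * pi * \<sigma>\<^sup>2) * cosh t)" for t
  proof -
    have "1 - tanh t = (cosh t - sinh t) / cosh t"
      by (simp add: tanh_def diff_divide_distrib)
    then have "1 - tanh t = exp (-t) / cosh t"
      by (simp add: cosh_minus_sinh)
    moreover have "- (t - \<sigma>\<^sup>2)\<^sup>2 / (2 * \<sigma>\<^sup>2) + - t = - (t\<^sup>2 + \<sigma>\<^sup>2 * \<sigma>\<^sup>2) / (2 * \<sigma>\<^sup>2)"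
      using assms by (simp add: field_simps power2_eq_square)
    ultimately show ?thesis
      unfolding normal_density_def by (simp flip: exp_add)
  qed
  show ?thesis unfolding closed_form by simp
qed

lemma abs_mult_tanh'_one_minus_tanh_le: "\<bar>s * tanh' s * (1 - tanh s)\<bar> \<le> 2"
proof -
  have "\<bar>1 - tanh s\<bar> \<le> 2" using tanh_real_bounds[of s] by auto
  then have "\<bar>s * tanh' s * (1 - tanh s)\<bar> \<le> tanh' s * \<bar>s\<bar> * 2"
    using tanh'_pos[of s] unfolding abs_mult by (simp add: mult_left_mono mult_ac)
  then show ?thesis using tanh'_mult_abs_le_1[of s] by linarith
qed

lemma integral_normal_density_tanh'_one_minus_tanh_eq_0:
  assumes "0 < \<sigma>"
  shows "(\<integral>s. normal_density (\<sigma>\<^sup>2) \<sigma> s * (s * tanh' s * (1 - tanh s)) \<partial>lborel) = 0"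
proof (rule integral_lborel_odd_eq_0)
  let ?p = "normal_density (\<sigma>\<^sup>2) \<sigma>"
  fix s
  have "?p (-s) * (- s * tanh' (-s) * (1 - tanh (-s))) = - (s * tanh' s) * (?p (-s) * (1 - tanh (-s)))"
    by simp
  also have "\<dots> = - (s * tanh' s) * (?p s * (1 - tanh s))"
    by (simp only: normal_density_mult_one_minus_tanh_even[OF assms])
  finally show "?p (-s) * (- s * tanh' (-s) * (1 - tanh (-s))) = - (?p s * (s * tanh' s * (1 - tanh s)))"
    by simp
qed

text \<open>This is G(mu, mu) = 0: Stein's identity cancels the Q-terms of the decomposition below.\<close>

lemma integral_normal_density_G_radial_eq_0:
  assumes \<sigma>: "0 < \<sigma>"
  shows "(\<integral>s. normal_density (\<sigma>\<^sup>2) \<sigma> s * G_radial (\<sigma>\<^sup>2) s \<partial>lborel) = 0"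
proof -
  define v where "v = \<sigma>\<^sup>2"
  have v: "0 < v" using \<sigma> by (simp add: v_def)
  let ?p = "normal_density v \<sigma>"
  define Q where "Q s = - (1/2) * v * tanh'' s" for s
  define Q' where "Q' s = - (1/2) * v * tanh''' s" for s
  define R where "R s = s * tanh' s * (1 - tanh s)" for s
  have Q: "(Q has_real_derivative Q' s) (at s)" "isCont Q' s" for s
    unfolding Q_def[abs_def] Q'_def[abs_def]
    by (intro DERIV_cmult has_real_derivative_tanh'' continuous_intros isCont_tanh''')+
  have Q_bound: "\<bar>Q s\<bar> \<le> v" for s
    using abs_tanh''_le[of s] tanh'_le_1[of s] v by (simp add: Q_def abs_mult)
  have Q'_bound: "\<bar>Q' s\<bar> \<le> 2 * v" for s
    using abs_tanh'''_le[of s] tanh'_le_1[of s] v by (simp add: Q'_def abs_mult)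
  have R_bound: "\<bar>R s\<bar> \<le> 2" for s
    unfolding R_def by (rule abs_mult_tanh'_one_minus_tanh_le)
  have [measurable]: "Q \<in> borel_measurable borel" "Q' \<in> borel_measurable borel" "R \<in> borel_measurable borel"
    unfolding Q_def[abs_def] Q'_def[abs_def] R_def[abs_def] by measurable
  have int_Q': "integrable lborel (\<lambda>s. ?p s * Q' s)"
    using \<sigma> Q'_bound by (intro integrable_normal_density_mult) auto
  have int_Q: "integrable lborel (\<lambda>s. ?p s * ((s - v) * Q s))"
    using integrable_normal_density_mult_moment[OF \<sigma> _ Q_bound, where c = v and k = 1] by simp
  have int_R: "integrable lborel (\<lambda>s. ?p s * R s)"
    using \<sigma> R_bound by (intro integrable_normal_density_mult) auto
  have decomposition: "?p s * G_radial v s = ?p s * Q' s - (1/v) * (?p s * ((s - v) * Q s)) + ?p s * R s" for s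
    unfolding G_radial_eq Q_def Q'_def R_def tanh''_def using v by (simp add: field_simps)
  have stein: "(\<integral>s. ?p s * ((s - v) * Q s) \<partial>lborel) = v * (\<integral>s. ?p s * Q' s \<partial>lborel)"
    using stein_identity[OF \<sigma> Q Q_bound Q'_bound] by (simp add: v_def)
  have odd: "(\<integral>s. ?p s * R s \<partial>lborel) = 0"
    unfolding R_def v_def by (rule integral_normal_density_tanh'_one_minus_tanh_eq_0[OF \<sigma>])
  have "(\<integral>s. ?p s * G_radial v s \<partial>lborel)
      = (\<integral>s. ?p s * Q' s \<partial>lborel) - (1/v) * (\<integral>s. ?p s * ((s - v) * Q s) \<partial>lborel) + (\<integral>s. ?p s * R s \<partial>lborel)"
    unfolding decomposition using int_Q int_Q' int_R by simp
  also have "\<dots> = 0" using stein odd v by simp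
  finally show ?thesis by (simp add: v_def)
qed

text \<open>For z >= -sigma/4 the point m + sigma z lies in [v/2, oo), where tanh' decays like s^-4;
  the left tail is paid for by a Gaussian moment of z.\<close>

lemma shift_ge_half_variance:
  fixes \<sigma> m z :: real
  assumes "0 < \<sigma>" "3/4 * \<sigma>\<^sup>2 \<le> m" "- \<sigma> / 4 \<le> z"
  shows "\<sigma>\<^sup>2 / 2 \<le> m + \<sigma> * z"
proof -
  have "\<sigma> * (- \<sigma> / 4) \<le> \<sigma> * z" using assms by (intro mult_left_mono) auto
  then show ?thesis using assms by (simp add: power2_eq_square)
qed

lemma left_tail_power_bound:
  fixes \<sigma> z :: real
  assumes "0 < \<sigma>" "z < - \<sigma> / 4"
  shows "(\<sigma>\<^sup>2) ^ k \<le> 16 ^ k * z ^ (2 * k)"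
proof -
  have "(\<sigma> / 4) ^ (2 * k) \<le> \<bar>z\<bar> ^ (2 * k)" using assms by (intro power_mono) auto
  then have "\<sigma> ^ (2 * k) \<le> 4 ^ (2 * k) * z ^ (2 * k)"
    by (simp add: power_divide power_even_abs field_simps)
  then show ?thesis by (simp add: power_mult)
qed

lemma abs_G_weight_shift_le:
  assumes \<sigma>: "0 < \<sigma>" and v: "2 \<le> \<sigma>\<^sup>2" and m: "3/4 * \<sigma>\<^sup>2 \<le> m"
  shows "\<bar>G_weight (\<sigma>\<^sup>2) (m + \<sigma> * z)\<bar> \<le> 384 / \<sigma>\<^sup>2 * (1 + z ^ (2 * 2))"
proof (cases "- \<sigma> / 4 \<le> z")
  case True
  have "\<bar>G_weight (\<sigma>\<^sup>2) (m + \<sigma> * z)\<bar> \<le> 384 / (\<sigma>\<^sup>2) ^ 3"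
    using abs_G_weight_le_right[OF v shift_ge_half_variance[OF \<sigma> m True]] .
  also have "\<dots> \<le> 384 / \<sigma>\<^sup>2"
    using v power_increasing[of 1 3 "\<sigma>\<^sup>2"] by (intro divide_left_mono) auto
  also have "\<dots> \<le> 384 / \<sigma>\<^sup>2 * (1 + z ^ (2 * 2))"
    using mult_left_mono[of 1 "1 + z ^ (2 * 2)" "384 / \<sigma>\<^sup>2"] zero_le_even_power[of "2 * 2" z] by simp
  finally show ?thesis .
next
  case False
  have "\<bar>G_weight (\<sigma>\<^sup>2) (m + \<sigma> * z)\<bar> \<le> \<sigma>\<^sup>2 + 1" using abs_G_weight_le_global by simp
  also have "\<dots> \<le> 384 * ((\<sigma>\<^sup>2) ^ 2 / 256) / \<sigma>\<^sup>2"
    using v \<sigma> by (simp add: power2_eq_square)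
  also have "\<dots> \<le> 384 * z ^ (2 * 2) / \<sigma>\<^sup>2"
    using left_tail_power_bound[OF \<sigma>, of z 2] False by (intro divide_right_mono) auto
  also have "\<dots> \<le> 384 / \<sigma>\<^sup>2 * (1 + z ^ (2 * 2))" using \<sigma> by (simp add: field_simps)
  finally show ?thesis .
qed

lemma G_radial_lipschitz:
  assumes "convex S" "x \<in> S" "y \<in> S" and bound: "\<And>\<xi>. \<xi> \<in> S \<Longrightarrow> \<bar>G_radial' v \<xi>\<bar> \<le> B"
  shows "\<bar>G_radial v x - G_radial v y\<bar> \<le> B * \<bar>x - y\<bar>"
proof -
  have "norm (G_radial v x - G_radial v y) \<le> B * norm (x - y)"
  proof (rule field_differentiable_bound[OF assms(1) _ _ assms(2,3)])
    show "(G_radial v has_field_derivative G_radial' v \<xi>) (at \<xi> within S)" for \<xi>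
      using has_real_derivative_G_radial has_field_derivative_at_within by blast
  qed (use bound in auto)
  then show ?thesis by simp
qed

lemma abs_G_radial_shift_diff_le:
  assumes \<sigma>: "0 < \<sigma>" and v: "2 \<le> \<sigma>\<^sup>2" and m: "3/4 * \<sigma>\<^sup>2 \<le> m"
  shows "\<bar>G_radial (\<sigma>\<^sup>2) (m + \<sigma> * z) - G_radial (\<sigma>\<^sup>2) (\<sigma>\<^sup>2 + \<sigma> * z)\<bar>
    \<le> 10^6 * \<bar>m - \<sigma>\<^sup>2\<bar> / (\<sigma>\<^sup>2) ^ 3 * (1 + z ^ (2 * 4))"
proof -
  have pos: "0 \<le> 10^6 * \<bar>m - \<sigma>\<^sup>2\<bar> / (\<sigma>\<^sup>2) ^ 3" by simp
  show ?thesis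
  proof (cases "- \<sigma> / 4 \<le> z")
    case True
    have "\<bar>G_radial (\<sigma>\<^sup>2) (m + \<sigma> * z) - G_radial (\<sigma>\<^sup>2) (\<sigma>\<^sup>2 + \<sigma> * z)\<bar>
        \<le> 3712 / (\<sigma>\<^sup>2) ^ 3 * \<bar>(m + \<sigma> * z) - (\<sigma>\<^sup>2 + \<sigma> * z)\<bar>"
    proof (rule G_radial_lipschitz[of "{\<sigma>\<^sup>2 / 2..}"])
      show "m + \<sigma> * z \<in> {\<sigma>\<^sup>2 / 2..}" "\<sigma>\<^sup>2 + \<sigma> * z \<in> {\<sigma>\<^sup>2 / 2..}"
        using shift_ge_half_variance[OF \<sigma> _ True] m v by auto
      show "\<bar>G_radial' (\<sigma>\<^sup>2) \<xi>\<bar> \<le> 3712 / (\<sigma>\<^sup>2) ^ 3" if "\<xi> \<in> {\<sigma>\<^sup>2 / 2..}" for \<xi>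
        using abs_G_radial'_le_right[OF v] that by simp
    qed (rule convex_real_interval)
    also have "\<dots> = 3712 * \<bar>m - \<sigma>\<^sup>2\<bar> / (\<sigma>\<^sup>2) ^ 3" by simp
    also have "\<dots> \<le> 10^6 * \<bar>m - \<sigma>\<^sup>2\<bar> / (\<sigma>\<^sup>2) ^ 3"
      by (intro divide_right_mono mult_right_mono) auto
    also have "\<dots> \<le> 10^6 * \<bar>m - \<sigma>\<^sup>2\<bar> / (\<sigma>\<^sup>2) ^ 3 * (1 + z ^ (2 * 4))"
      using mult_left_mono[OF _ pos, of 1 "1 + z ^ (2 * 4)"] zero_le_even_power[of "2 * 4" z] by simp
    finally show ?thesis .
  next
    case False
    have "\<bar>G_radial (\<sigma>\<^sup>2) (m + \<sigma> * z) - G_radial (\<sigma>\<^sup>2) (\<sigma>\<^sup>2 + \<sigma> * z)\<bar>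
        \<le> (10 * \<sigma>\<^sup>2 + 9) * \<bar>(m + \<sigma> * z) - (\<sigma>\<^sup>2 + \<sigma> * z)\<bar>"
      by (rule G_radial_lipschitz[of UNIV]) (auto intro: abs_G_radial'_le_global)
    also have "\<dots> = (10 * \<sigma>\<^sup>2 + 9) * \<bar>m - \<sigma>\<^sup>2\<bar>" by simp
    also have "\<dots> \<le> 15 * \<sigma>\<^sup>2 * \<bar>m - \<sigma>\<^sup>2\<bar>"
      using v by (intro mult_right_mono) auto
    also have "\<dots> = 15 * (\<sigma>\<^sup>2) ^ 4 * \<bar>m - \<sigma>\<^sup>2\<bar> / (\<sigma>\<^sup>2) ^ 3"
      using \<sigma> by (simp add: power_eq_if)
    also have "\<dots> \<le> 15 * (16 ^ 4 * z ^ (2 * 4)) * \<bar>m - \<sigma>\<^sup>2\<bar> / (\<sigma>\<^sup>2) ^ 3"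
      using left_tail_power_bound[OF \<sigma>, of z 4] False
      by (intro divide_right_mono mult_right_mono mult_left_mono) auto
    also have "\<dots> \<le> 10^6 * \<bar>m - \<sigma>\<^sup>2\<bar> / (\<sigma>\<^sup>2) ^ 3 * (1 + z ^ (2 * 4))"
      using \<sigma> by (simp add: field_simps)
    finally show ?thesis .
  qed
qed

lemma std_normal_integral_G_weight_shift_le:
  assumes \<sigma>: "0 < \<sigma>" and v: "2 \<le> \<sigma>\<^sup>2" and m: "3/4 * \<sigma>\<^sup>2 \<le> m"
  shows "\<bar>\<integral>z. std_normal_density z * G_weight (\<sigma>\<^sup>2) (m + \<sigma> * z) \<partial>lborel\<bar> \<le> 1536 / \<sigma>\<^sup>2"
proof -
  have "\<bar>\<integral>z. std_normal_density z * G_weight (\<sigma>\<^sup>2) (m + \<sigma> * z) \<partial>lborel\<bar>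
      \<le> 384 / \<sigma>\<^sup>2 * (1 + fact (2 * 2) / (2 ^ 2 * fact 2))"
    by (rule std_normal_integral_le_moment_bound) (use abs_G_weight_shift_le[OF assms] in auto)
  also have "\<dots> = 1536 / \<sigma>\<^sup>2" by (simp add: fact_numeral)
  finally show ?thesis .
qed

lemma std_normal_integral_G_radial_shift_le:
  assumes \<sigma>: "0 < \<sigma>" and v: "2 \<le> \<sigma>\<^sup>2" and m: "3/4 * \<sigma>\<^sup>2 \<le> m"
  shows "\<bar>\<integral>z. std_normal_density z * G_radial (\<sigma>\<^sup>2) (m + \<sigma> * z) \<partial>lborel\<bar>
    \<le> 106 * 10^6 * \<bar>m - \<sigma>\<^sup>2\<bar> / (\<sigma>\<^sup>2) ^ 3"
proof -
  let ?\<phi> = std_normal_density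
  have int: "integrable lborel (\<lambda>z. ?\<phi> z * G_radial (\<sigma>\<^sup>2) (c + \<sigma> * z))" for c
    using abs_G_radial_le_global[of "\<sigma>\<^sup>2"] by (intro integrable_normal_density_mult) auto
  have centered: "(\<integral>z. ?\<phi> z * G_radial (\<sigma>\<^sup>2) (\<sigma>\<^sup>2 + \<sigma> * z) \<partial>lborel) = 0"
    using integral_normal_density_G_radial_eq_0[OF \<sigma>] unfolding integral_normal_density_eq_std[OF \<sigma>] .
  have "(\<integral>z. ?\<phi> z * G_radial (\<sigma>\<^sup>2) (m + \<sigma> * z) \<partial>lborel)
      = (\<integral>z. ?\<phi> z * (G_radial (\<sigma>\<^sup>2) (m + \<sigma> * z) - G_radial (\<sigma>\<^sup>2) (\<sigma>\<^sup>2 + \<sigma> * z)) \<partial>lborel)"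
    using int[of m] int[of "\<sigma>\<^sup>2"] centered by (simp add: right_diff_distrib)
  also have "\<bar>\<dots>\<bar> \<le> 10^6 * \<bar>m - \<sigma>\<^sup>2\<bar> / (\<sigma>\<^sup>2) ^ 3 * (1 + fact (2 * 4) / (2 ^ 4 * fact 4))"
    by (rule std_normal_integral_le_moment_bound) (use abs_G_radial_shift_diff_le[OF assms] in auto)
  finally show ?thesis by (simp add: fact_numeral)
qed

abbreviation unit_normal :: "real \<Rightarrow> real measure" where
  "unit_normal c \<equiv> density lborel (normal_density c 1)"

lemma prob_space_unit_normal: "prob_space (unit_normal c)"
  by (rule prob_space_normal_density) simp

lemma prob_space_gauss: "prob_space (gauss d mus)"
  unfolding gauss_def by (intro prob_space_PiM prob_space_unit_normal)

lemma gauss_component_measurable: "i < d \<Longrightarrow> (\<lambda>x. x i) \<in> measurable (gauss d mus) (unit_normal (mus i))"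
  unfolding gauss_def by (rule measurable_component_singleton) simp

lemma gauss_component_borel_measurable [measurable]:
  "i < d \<Longrightarrow> (\<lambda>x. x i) \<in> borel_measurable (gauss d mus)"
  using gauss_component_measurable[of i d mus] by (simp add: measurable_def)

lemma distr_gauss_component:
  assumes "i < d"
  shows "distr (gauss d mus) borel (\<lambda>x. x i) = unit_normal (mus i)"
proof -
  have "distr (gauss d mus) borel (\<lambda>x. x i) = distr (gauss d mus) (unit_normal (mus i)) (\<lambda>x. x i)"
    by (rule distr_cong) auto
  also have "\<dots> = unit_normal (mus i)"
    unfolding gauss_def using assms by (intro distr_PiM_component prob_space_unit_normal) auto
  finally show ?thesis .
qed

lemma distributed_gauss_component:
  assumes "i < d"
  shows "distributed (gauss d mus) lborel (\<lambda>x. x i) (normal_density (mus i) 1)"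
  unfolding distributed_def
proof (intro conjI)
  have "distr (gauss d mus) lborel (\<lambda>x. x i) = distr (gauss d mus) borel (\<lambda>x. x i)"
    by (rule distr_cong) auto
  then show "distr (gauss d mus) lborel (\<lambda>x. x i) = density lborel (normal_density (mus i) 1)"
    using distr_gauss_component[OF assms] by simp
  show "(\<lambda>x. x i) \<in> measurable (gauss d mus) lborel"
    using gauss_component_borel_measurable[OF assms] by (simp add: measurable_def)
qed simp

lemma indep_vars_gauss_components:
  assumes "0 < d"
  shows "prob_space.indep_vars (gauss d mus) (\<lambda>_. borel) (\<lambda>i x. x i) {..<d}"
proof -
  interpret prob_space "gauss d mus" by (rule prob_space_gauss)
  have "distr (gauss d mus) (PiM {..<d} (\<lambda>_. borel)) (\<lambda>x. \<lambda>i\<in>{..<d}. x i)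
      = distr (gauss d mus) (PiM {..<d} (\<lambda>_. borel)) (\<lambda>x. x)"
    by (rule distr_cong) (auto simp: gauss_def space_PiM PiE_restrict)
  also have "\<dots> = gauss d mus"
    unfolding gauss_def by (rule distr_id2) (rule sets_PiM_cong, simp_all)
  also have "\<dots> = PiM {..<d} (\<lambda>i. distr (gauss d mus) borel (\<lambda>x. x i))"
    unfolding gauss_def by (rule PiM_cong) (auto simp: distr_gauss_component[unfolded gauss_def])
  finally show ?thesis
    using assms by (subst indep_vars_iff_distr_eq_PiM') auto
qed

lemma vinner_borel_measurable [measurable]: "vinner d mu \<in> borel_measurable (gauss d mus)"
  unfolding vinner_def[abs_def] by measurable

lemma distributed_vinner_gauss:
  assumes r: "0 < vnorm d mu"
  shows "distributed (gauss d mus) lborel (vinner d mu) (normal_density (vinner d mu mus) (vnorm d mu))"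
proof -
  interpret prob_space "gauss d mus" by (rule prob_space_gauss)
  define J where "J = {i. i < d \<and> mu i \<noteq> 0}"
    \<comment> \<open>the sum rule for independent normals needs positive variances\<close>
  have sum_J: "sum g J = (\<Sum>i<d. g i)" if "\<And>i. mu i = 0 \<Longrightarrow> g i = 0" for g :: "nat \<Rightarrow> real"
    by (rule sum.mono_neutral_left) (auto simp: J_def that)
  have vnorm: "vnorm d mu = sqrt (\<Sum>i<d. mu i * mu i)" by (simp add: vnorm_def vinner_def)
  have "J \<noteq> {}"
  proof
    assume "J = {}"
    then have "(\<Sum>i<d. mu i * mu i) = 0" using sum_J[of "\<lambda>i. mu i * mu i"] by simp
    then show False using r vnorm by simp
  qed
  then have "0 < d" unfolding J_def by auto
  have indep: "indep_vars (\<lambda>_. borel) (\<lambda>i x. mu i * x i) J"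
    using indep_vars_compose2[OF indep_vars_gauss_components[OF \<open>0 < d\<close>], of "\<lambda>i y. mu i * y" "\<lambda>_. borel"]
    by (rule indep_vars_subset) (auto simp: J_def)
  have "distributed (gauss d mus) lborel (\<lambda>x. mu i * x i) (normal_density (mu i * mus i) \<bar>mu i\<bar>)"
    if "i \<in> J" for i
  proof -
    have "i < d" "mu i \<noteq> 0" using that by (auto simp: J_def)
    from normal_density_affine[OF distributed_gauss_component[OF this(1)] _ this(2), of 0]
    show ?thesis by simp
  qed
  then have "distributed (gauss d mus) lborel (\<lambda>x. \<Sum>i\<in>J. mu i * x i)
      (normal_density (\<Sum>i\<in>J. mu i * mus i) (sqrt (\<Sum>i\<in>J. \<bar>mu i\<bar>\<^sup>2)))"
    using \<open>J \<noteq> {}\<close> by (intro sum_indep_normal indep) (auto simp: J_def)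
  moreover have "(\<lambda>x. \<Sum>i\<in>J. mu i * x i) = vinner d mu"
    unfolding vinner_def by (rule ext, rule sum_J) simp
  moreover have "(\<Sum>i\<in>J. mu i * mus i) = vinner d mu mus"
    unfolding vinner_def by (rule sum_J) simp
  moreover have "sqrt (\<Sum>i\<in>J. \<bar>mu i\<bar>\<^sup>2) = vnorm d mu"
    unfolding vnorm by (subst sum_J[symmetric]) (auto simp: power2_eq_square)
  ultimately show ?thesis by simp
qed

lemma integral_gauss_vinner:
  assumes "0 < vnorm d mu" and [measurable]: "f \<in> borel_measurable borel"
  shows "(\<integral>x. f (vinner d mu x) \<partial>gauss d mus)
       = (\<integral>z. std_normal_density z * f (vinner d mu mus + vnorm d mu * z) \<partial>lborel)"
  using distributed_integral[OF distributed_vinner_gauss[OF assms(1)], of f, symmetric]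
  by (simp add: integral_normal_density_eq_std[OF assms(1)])

lemma integrable_gauss_bounded:
  fixes F :: "(nat \<Rightarrow> real) \<Rightarrow> real"
  assumes "F \<in> borel_measurable (gauss d mus)" "\<And>x. \<bar>F x\<bar> \<le> B"
  shows "integrable (gauss d mus) F"
proof -
  interpret prob_space "gauss d mus" by (rule prob_space_gauss)
  show ?thesis using assms by (intro integrable_const_bound[of _ B]) auto
qed

lemma integrable_gauss_component_centered:
  assumes i: "i < d"
  shows "integrable (gauss d mus) (\<lambda>x. x i - mus i)"
proof -
  have "integrable lborel (\<lambda>y. normal_density (mus i) 1 y * (y - mus i) ^ 1)"
    by (rule integrable_normal_moment) simp
  then have "integrable (distr (gauss d mus) borel (\<lambda>x. x i)) (\<lambda>y. y - mus i)"
    by (simp add: distr_gauss_component[OF i] integrable_density)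
  then show ?thesis
    using gauss_component_borel_measurable[OF i] by (simp add: integrable_distr_eq)
qed

lemma integrable_gauss_centered_mult:
  fixes g :: "real \<Rightarrow> real"
  assumes i: "i < d" and [measurable]: "g \<in> borel_measurable borel" and bound: "\<And>s. \<bar>g s\<bar> \<le> B"
  shows "integrable (gauss d mus) (\<lambda>x. (x i - mus i) * g (vinner d mu x))"
proof (rule Bochner_Integration.integrable_bound)
  show "integrable (gauss d mus) (\<lambda>x. \<bar>B\<bar> * (x i - mus i))"
    using integrable_gauss_component_centered[OF i] by simp
  show "AE x in gauss d mus. norm ((x i - mus i) * g (vinner d mu x)) \<le> norm (\<bar>B\<bar> * (x i - mus i))"
  proof (rule AE_I2)
    fix x
    have "\<bar>x i - mus i\<bar> * \<bar>g (vinner d mu x)\<bar> \<le> \<bar>x i - mus i\<bar> * \<bar>B\<bar>"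
      by (intro mult_left_mono order_trans[OF bound abs_ge_self]) simp
    then show "norm ((x i - mus i) * g (vinner d mu x)) \<le> norm (\<bar>B\<bar> * (x i - mus i))"
      by (simp add: abs_mult mult.commute)
  qed
qed (use i in measurable)

lemma vinner_fun_upd:
  assumes "i < d"
  shows "vinner d mu (x(i := y)) = mu i * y + vinner d mu (x(i := 0))"
proof -
  have "vinner d mu (x(i := y)) = mu i * y + (\<Sum>j\<in>{..<d} - {i}. mu j * x j)"
    unfolding vinner_def using assms by (subst sum.remove[of _ i]) (auto intro!: sum.cong)
  moreover have "vinner d mu (x(i := 0)) = (\<Sum>j\<in>{..<d} - {i}. mu j * x j)"
    unfolding vinner_def using assms by (subst sum.remove[of _ i]) (auto intro!: sum.cong)
  ultimately show ?thesis by simp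
qed

lemma stein_identity_affine:
  fixes g g' :: "real \<Rightarrow> real"
  assumes g: "\<And>s. (g has_real_derivative g' s) (at s)" and cont: "\<And>s. isCont g' s"
    and bound: "\<And>s. \<bar>g s\<bar> \<le> B" and bound': "\<And>s. \<bar>g' s\<bar> \<le> B'"
  shows "(\<integral>y. (y - c) * g (a * y + b) \<partial>unit_normal c) = a * (\<integral>y. g' (a * y + b) \<partial>unit_normal c)"
proof -
  have [measurable]: "g \<in> borel_measurable borel" "g' \<in> borel_measurable borel"
    using g cont by (auto intro: borel_measurable_continuous_real DERIV_isCont)
  have "(\<integral>y. normal_density c 1 y * ((y - c) * g (a * y + b)) \<partial>lborel)
      = 1\<^sup>2 * (\<integral>y. normal_density c 1 y * (a * g' (a * y + b)) \<partial>lborel)"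
  proof (rule stein_identity[where B = B and B' = "\<bar>a\<bar> * B'"])
    show "((\<lambda>y. g (a * y + b)) has_real_derivative a * g' (a * y + b)) (at y)" for y
    proof -
      have "((\<lambda>y. a * y + b) has_real_derivative a * 1 + 0) (at y)"
        by (intro DERIV_add DERIV_cmult DERIV_ident DERIV_const)
      from DERIV_chain2[OF g this] show ?thesis by (simp add: mult.commute)
    qed
    show "isCont (\<lambda>y. a * g' (a * y + b)) y" for y
      by (intro continuous_intros isCont_o2[OF _ cont])
    show "\<bar>a * g' (a * y + b)\<bar> \<le> \<bar>a\<bar> * B'" for y
      unfolding abs_mult by (intro mult_left_mono bound') simp
  qed (use bound in simp_all)
  then show ?thesis by (simp add: integral_density mult.left_commute)
qed


lemma gauss_stein_identity:
  fixes g g' :: "real \<Rightarrow> real"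
  assumes i: "i < d"
    and g: "\<And>s. (g has_real_derivative g' s) (at s)" and cont: "\<And>s. isCont g' s"
    and bound: "\<And>s. \<bar>g s\<bar> \<le> B" and bound': "\<And>s. \<bar>g' s\<bar> \<le> B'"
  shows "(\<integral>x. (x i - mus i) * g (vinner d mu x) \<partial>gauss d mus) = mu i * (\<integral>x. g' (vinner d mu x) \<partial>gauss d mus)"
proof -
  interpret product_sigma_finite "\<lambda>j. unit_normal (mus j)"
    unfolding product_sigma_finite_def
    using prob_space_imp_sigma_finite[OF prob_space_unit_normal] by blast
  have g_measurable [measurable]: "g \<in> borel_measurable borel"
    and [measurable]: "g' \<in> borel_measurable borel"
    using g cont by (auto intro: borel_measurable_continuous_real DERIV_isCont)
  define I where "I = {..<d} - {i}"
  have I: "finite I" "i \<notin> I" by (auto simp: I_def)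
  have gauss: "gauss d mus = PiM (insert i I) (\<lambda>j. unit_normal (mus j))"
    using i by (simp add: gauss_def I_def insert_absorb)
  have int_g: "integrable (PiM (insert i I) (\<lambda>j. unit_normal (mus j))) (\<lambda>x. (x i - mus i) * g (vinner d mu x))"
    using integrable_gauss_centered_mult[OF i g_measurable bound, where mus = mus and mu = mu]
    unfolding gauss .
  have int_g': "integrable (PiM (insert i I) (\<lambda>j. unit_normal (mus j))) (\<lambda>x. g' (vinner d mu x))"
  proof -
    have "integrable (gauss d mus) (\<lambda>x. g' (vinner d mu x))"
      by (rule integrable_gauss_bounded[OF _ bound']) measurable
    then show ?thesis unfolding gauss .
  qed
  have slice: "(\<integral>y. ((x(i := y)) i - mus i) * g (vinner d mu (x(i := y))) \<partial>unit_normal (mus i))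
      = mu i * (\<integral>y. g' (vinner d mu (x(i := y))) \<partial>unit_normal (mus i))" for x
  proof -
    define b where "b = vinner d mu (x(i := 0))"
    have "vinner d mu (x(i := y)) = mu i * y + b" for y
      unfolding b_def by (rule vinner_fun_upd[OF i])
    then show ?thesis using stein_identity_affine[OF g cont bound bound', of "mus i" "mu i" b] by simp
  qed
  have "(\<integral>x. (x i - mus i) * g (vinner d mu x) \<partial>gauss d mus)
      = (\<integral>x. (\<integral>y. ((x(i := y)) i - mus i) * g (vinner d mu (x(i := y))) \<partial>unit_normal (mus i))
           \<partial>PiM I (\<lambda>j. unit_normal (mus j)))"
    unfolding gauss by (rule product_integral_insert[OF I int_g])
  also have "\<dots> = mu i * (\<integral>x. (\<integral>y. g' (vinner d mu (x(i := y))) \<partial>unit_normal (mus i))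
           \<partial>PiM I (\<lambda>j. unit_normal (mus j)))"
    unfolding slice by (rule integral_mult_right_zero)
  also have "\<dots> = mu i * (\<integral>x. g' (vinner d mu x) \<partial>gauss d mus)"
    unfolding gauss by (simp add: product_integral_insert[OF I int_g'])
  finally show ?thesis .
qed

lemma Gcomp_eq:
  assumes i: "i < d"
  shows "Gcomp d mu mus i = (\<integral>x. G_weight ((vnorm d mu)\<^sup>2) (vinner d mu x) \<partial>gauss d mus) * (mus i - mu i)
    + (\<integral>x. G_radial ((vnorm d mu)\<^sup>2) (vinner d mu x) \<partial>gauss d mus) * mu i"
proof -
  define v where "v = (vnorm d mu)\<^sup>2"
  have v: "0 \<le> v" by (simp add: v_def)
  let ?P = "gauss d mus" and ?s = "vinner d mu"
  have integrand: "- (1/2) * deriv (deriv tanh) (?s x) * (vnorm d mu)\<^sup>2 * x i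
      + deriv tanh (?s x) * ?s x * x i - deriv tanh (?s x) * mu i
      = (x i - mus i) * G_weight v (?s x) + mus i * G_weight v (?s x) - mu i * tanh' (?s x)" for x
    unfolding deriv_tanh deriv_tanh' G_weight_def v_def by (simp add: field_simps)
  have int_centered: "integrable ?P (\<lambda>x. (x i - mus i) * G_weight v (?s x))"
    by (rule integrable_gauss_centered_mult[OF i G_weight_measurable abs_G_weight_le_global[OF v]])
  have int_bounded: "integrable ?P (\<lambda>x. G_weight v (?s x))" "integrable ?P (\<lambda>x. G_weight' v (?s x))"
      "integrable ?P (\<lambda>x. tanh' (?s x))"
    by (rule integrable_gauss_bounded measurable_compose[OF vinner_borel_measurable]
        G_weight_measurable G_weight'_measurable tanh'_measurable
        abs_G_weight_le_global[OF v] abs_G_weight'_le_global[OF v] abs_tanh'_le_1)+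
  have stein: "(\<integral>x. (x i - mus i) * G_weight v (?s x) \<partial>?P) = mu i * (\<integral>x. G_weight' v (?s x) \<partial>?P)"
    using gauss_stein_identity[OF i has_real_derivative_G_weight isCont_G_weight'
        abs_G_weight_le_global[OF v] abs_G_weight'_le_global[OF v]] .
  have "Gcomp d mu mus i
      = (\<integral>x. (x i - mus i) * G_weight v (?s x) + mus i * G_weight v (?s x) - mu i * tanh' (?s x) \<partial>?P)"
    unfolding Gcomp_def integrand ..
  also have "\<dots> = mu i * (\<integral>x. G_weight' v (?s x) \<partial>?P) + mus i * (\<integral>x. G_weight v (?s x) \<partial>?P)
      - mu i * (\<integral>x. tanh' (?s x) \<partial>?P)"
    using int_centered int_bounded stein by simp
  also have "\<dots> = (\<integral>x. G_weight v (?s x) \<partial>?P) * (mus i - mu i) + (\<integral>x. G_radial v (?s x) \<partial>?P) * mu i"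
    using int_bounded by (simp add: G_radial_def algebra_simps)
  finally show ?thesis by (simp add: v_def)
qed

lemma vnorm_nonneg [simp]: "0 \<le> vnorm d u"
  unfolding vnorm_def vinner_def by (simp add: sum_nonneg)

lemma vnorm_eq_L2_set: "vnorm d u = L2_set u {..<d}"
  unfolding vnorm_def vinner_def L2_set_def by (simp add: power2_eq_square)

lemma vnorm_minus_commute: "vnorm d (\<lambda>i. u i - w i) = vnorm d (\<lambda>i. w i - u i)"
  unfolding vnorm_def vinner_def by (simp add: algebra_simps)

lemma abs_vinner_minus_vnorm_square_le:
  "\<bar>vinner d mu mus - (vnorm d mu)\<^sup>2\<bar> \<le> vnorm d mu * vnorm d (\<lambda>i. mu i - mus i)"
proof -
  have "vinner d mu mus - (vnorm d mu)\<^sup>2 = (\<Sum>i<d. mu i * (mus i - mu i))"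
    by (simp add: vnorm_def vinner_def sum_nonneg sum_subtractf right_diff_distrib)
  then have "\<bar>vinner d mu mus - (vnorm d mu)\<^sup>2\<bar> \<le> (\<Sum>i<d. \<bar>mu i\<bar> * \<bar>mus i - mu i\<bar>)"
    by (simp add: abs_mult[symmetric] sum_abs)
  also have "\<dots> \<le> L2_set mu {..<d} * L2_set (\<lambda>i. mus i - mu i) {..<d}"
    by (rule L2_set_mult_ineq)
  finally show ?thesis by (metis vnorm_eq_L2_set vnorm_minus_commute)
qed

lemma L2_set_linear_combination_le:
  fixes f g :: "'a \<Rightarrow> real"
  shows "L2_set (\<lambda>i. a * f i + b * g i) I \<le> \<bar>a\<bar> * L2_set f I + \<bar>b\<bar> * L2_set g I"
proof -
  have scale: "L2_set (\<lambda>i. c * h i) I = \<bar>c\<bar> * L2_set h I" for c and h :: "'a \<Rightarrow> real"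
    unfolding L2_set_def by (simp add: power_mult_distrib real_sqrt_mult sum_distrib_left[symmetric])
  show ?thesis using L2_set_triangle_ineq[of "\<lambda>i. a * f i" "\<lambda>i. b * g i" I] by (simp add: scale)
qed

lemma norm_Gcomp_le:
  assumes big: "2 \<le> (vnorm d mu)\<^sup>2" and aligned: "3/4 * (vnorm d mu)\<^sup>2 \<le> vinner d mu mus"
  shows "sqrt (\<Sum>i<d. (Gcomp d mu mus i)\<^sup>2)
    \<le> (1536 / (vnorm d mu)\<^sup>2 + 106 * 10^6 / (vnorm d mu) ^ 4) * vnorm d (\<lambda>i. mu i - mus i)"
proof -
  define r where "r = vnorm d mu"
  define D where "D = vnorm d (\<lambda>i. mu i - mus i)"
  define A where "A = (\<integral>x. G_weight (r\<^sup>2) (vinner d mu x) \<partial>gauss d mus)"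
  define C where "C = (\<integral>x. G_radial (r\<^sup>2) (vinner d mu x) \<partial>gauss d mus)"
  have "0 \<le> r" by (simp add: r_def)
  moreover have "r \<noteq> 0" using big by (auto simp: r_def)
  ultimately have r: "0 < r" by simp
  have D: "0 \<le> D" by (simp add: D_def)
  have A_bound: "\<bar>A\<bar> \<le> 1536 / r\<^sup>2"
    unfolding A_def integral_gauss_vinner[OF r[unfolded r_def] G_weight_measurable]
    using std_normal_integral_G_weight_shift_le[OF r] big aligned by (simp add: r_def)
  have C_bound: "\<bar>C\<bar> \<le> 106 * 10^6 * (r * D) / (r\<^sup>2) ^ 3"
  proof -
    have "\<bar>C\<bar> \<le> 106 * 10^6 * \<bar>vinner d mu mus - r\<^sup>2\<bar> / (r\<^sup>2) ^ 3"
      unfolding C_def integral_gauss_vinner[OF r[unfolded r_def] G_radial_measurable]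
      using std_normal_integral_G_radial_shift_le[OF r] big aligned by (simp add: r_def)
    also have "\<dots> \<le> 106 * 10^6 * (r * D) / (r\<^sup>2) ^ 3"
      using abs_vinner_minus_vnorm_square_le[of d mu mus]
      by (intro divide_right_mono mult_left_mono) (simp_all add: r_def D_def)
    finally show ?thesis .
  qed
  have "sqrt (\<Sum>i<d. (Gcomp d mu mus i)\<^sup>2) = L2_set (\<lambda>i. A * (mus i - mu i) + C * mu i) {..<d}"
    unfolding L2_set_def by (simp add: Gcomp_eq A_def C_def r_def)
  also have "\<dots> \<le> \<bar>A\<bar> * L2_set (\<lambda>i. mus i - mu i) {..<d} + \<bar>C\<bar> * L2_set mu {..<d}"
    by (rule L2_set_linear_combination_le)
  also have "\<dots> = \<bar>A\<bar> * D + \<bar>C\<bar> * r"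
    using vnorm_minus_commute[of d mus mu] by (simp add: D_def r_def vnorm_eq_L2_set[symmetric])
  also have "\<dots> \<le> 1536 / r\<^sup>2 * D + 106 * 10^6 * (r * D) / (r\<^sup>2) ^ 3 * r"
    using A_bound C_bound D r by (intro add_mono mult_right_mono) auto
  also have "\<dots> = (1536 / r\<^sup>2 + 106 * 10^6 / r ^ 4) * D"
    using r by (simp add: field_simps power_eq_if)
  finally show ?thesis by (simp add: r_def D_def)
qed

lemma vinner_ge_of_aligned:
  assumes "0 < vnorm d mu" "vnorm d mu \<le> 4/3 * vinner d (\<lambda>i. mu i / vnorm d mu) mus"
  shows "3/4 * (vnorm d mu)\<^sup>2 \<le> vinner d mu mus"
proof -
  have "vinner d (\<lambda>i. mu i / vnorm d mu) mus = vinner d mu mus / vnorm d mu"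
    by (simp add: vinner_def sum_divide_distrib)
  then have "vnorm d mu * vnorm d mu \<le> vnorm d mu * (4/3 * (vinner d mu mus / vnorm d mu))"
    using assms by (intro mult_left_mono) simp_all
  then show ?thesis using assms(1) by (simp add: field_simps power2_eq_square)
qed

theorem lemmaC9:
  shows "\<exists>c::real. c > 0 \<and>
    (\<forall>(d::nat) (mu::nat \<Rightarrow> real) (mus::nat \<Rightarrow> real).
       vnorm d mu \<noteq> 0 \<longrightarrow>
       c \<le> vnorm d mu \<longrightarrow>
       vnorm d mu \<le> 4/3 * vinner d (\<lambda>i. mu i / vnorm d mu) mus \<longrightarrow>
       sqrt (\<Sum>i<d. (Gcomp d mu mus i)\<^sup>2) \<le> 0.01 * vnorm d (\<lambda>i. mu i - mus i))"
proof (intro exI[of _ 1000] conjI allI impI)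
  fix d :: nat and mu mus :: "nat \<Rightarrow> real"
  assume big: "1000 \<le> vnorm d mu" and aligned: "vnorm d mu \<le> 4/3 * vinner d (\<lambda>i. mu i / vnorm d mu) mus"
  define r where "r = vnorm d mu"
  have r: "1000 \<le> r" using big by (simp add: r_def)
  have "1000\<^sup>2 \<le> r\<^sup>2" using r by (intro power_mono) auto
  then have "sqrt (\<Sum>i<d. (Gcomp d mu mus i)\<^sup>2)
      \<le> (1536 / r\<^sup>2 + 106 * 10^6 / r ^ 4) * vnorm d (\<lambda>i. mu i - mus i)"
    using norm_Gcomp_le vinner_ge_of_aligned[OF _ aligned] big by (simp add: r_def)
  also have "\<dots> \<le> 0.01 * vnorm d (\<lambda>i. mu i - mus i)"
  proof (rule mult_right_mono)
    have "1536 / r\<^sup>2 \<le> 1536 / 1000\<^sup>2" "106 * 10^6 / r ^ 4 \<le> 106 * 10^6 / 1000 ^ 4"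
      using r by (intro divide_left_mono power_mono mult_pos_pos; simp)+
    then show "1536 / r\<^sup>2 + 106 * 10^6 / r ^ 4 \<le> 0.01" by simp
  qed simp
  finally show "sqrt (\<Sum>i<d. (Gcomp d mu mus i)\<^sup>2) \<le> 0.01 * vnorm d (\<lambda>i. mu i - mus i)" .
qed simp

end
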